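(* Assume the ranking mechanism is consistent. Then for every $n\ge1$, every CDF $K_n$ and every $t\in\mathbb R$, $$\mathbb V\big(F_{n;jps}(t)\big)=\mathbb E(W_1^2J_1)\sum_{r=1}^H\mathbb V\big(K_n(t-X_{[r]})\big)+\frac{H}{H-1}\,\mathbb V(W_1)\sum_{r=1}^H\Big(\mathbb E\big(K_n(t-X_{[r]})\big)-\mathbb E\big(K_n(t-X)\big)\Big)^2 ,$$ and equivalently $$\mathbb V\big(F_{n;jps}(t)\big)=H\,\mathbb E(W_1^2J_1)\,\mathbb V\big(K_n(t-X)\big)-\Big[\mathbb E(W_1^2J_1)-\frac{H}{H-1}\mathbb V(W_1)\Big]\sum_{r=1}^H\Big(\mathbb E\big(K_n(t-X_{[r]})\big)-\mathbb E\big(K_n(t-X)\big)\Big)^2 .$$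
   Context: Setting (judgment post stratification, JPS). Fix an integer set size $H\ge 2$ and a sample size $n\ge 1$. A JPS sample is a collection of $n$ i.i.d. pairs $(X_1,R_1),\dots,(X_n,R_n)$, where $R_i\in\{1,\dots,H\}$ with $P(R_i=r)=1/H$ for each $r$, and conditionally on $R_i=r$ the real random variable $X_i$ has CDF $F_{[r]}$; $X_{[r]}$ denotes a random variable with CDF $F_{[r]}$. Let $F$ be the population CDF and $X$ a random variable with CDF $F$. The ranking mechanism is called consistent if $F(t)=\frac1H\sum_{r=1}^H F_{[r]}(t)$ for all $t\in\mathbb R$ (so each $X_i$ has marginal CDF $F$). Define $I_{ir}=\mathbb I(R_i=r)$, $N_r=\sum_{i=1}^n I_{ir}$, $J_r=1/N_r$ if $N_r>0$ and $J_r=0$ otherwise, $d_n=\sum_{r=1}^H\mathbb I(N_r>0)$, and $W_r=\mathbb I(N_r>0)/d_n$. Given a CDF $K_n$ on $\mathbb R$, define $F_{n;[r]}(t)=\frac1{N_r}\sum_{i=1}^n K_n(t-X_i)I_{ir}$ if $N_r>0$ and $F_{n;[r]}(t)=0$ otherwise, and the JPS estimator $F_{n;jps}(t)=\sum_{r=1}^H W_rF_{n;[r]}(t)$. *)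

theory Defs
  imports "HOL-Probability.Probability"
begin

definition is_cdf :: "(real \<Rightarrow> real) \<Rightarrow> bool" where
  "is_cdf K \<longleftrightarrow> mono K \<and> (\<forall>x. continuous (at_right x) K) \<and>
     (K \<longlongrightarrow> 0) at_bot \<and> (K \<longlongrightarrow> 1) at_top"

text \<open>JPS quantities for a sample of size n with ranks R i (i < n) and values X i.
  Indices i range over 0..n-1; ranks r over 1..H.\<close>

definition jps_I :: "(nat \<Rightarrow> 'a \<Rightarrow> nat) \<Rightarrow> nat \<Rightarrow> nat \<Rightarrow> 'a \<Rightarrow> real" where
  "jps_I R i r \<omega> = (if R i \<omega> = r then 1 else 0)"

definition jps_N :: "nat \<Rightarrow> (nat \<Rightarrow> 'a \<Rightarrow> nat) \<Rightarrow> nat \<Rightarrow> 'a \<Rightarrow> nat" where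
  "jps_N n R r \<omega> = card {i. i < n \<and> R i \<omega> = r}"

definition jps_J :: "nat \<Rightarrow> (nat \<Rightarrow> 'a \<Rightarrow> nat) \<Rightarrow> nat \<Rightarrow> 'a \<Rightarrow> real" where
  "jps_J n R r \<omega> = (if jps_N n R r \<omega> > 0 then 1 / real (jps_N n R r \<omega>) else 0)"

definition jps_d :: "nat \<Rightarrow> nat \<Rightarrow> (nat \<Rightarrow> 'a \<Rightarrow> nat) \<Rightarrow> 'a \<Rightarrow> nat" where
  "jps_d H n R \<omega> = card {r \<in> {1..H}. jps_N n R r \<omega> > 0}"

definition jps_W :: "nat \<Rightarrow> nat \<Rightarrow> (nat \<Rightarrow> 'a \<Rightarrow> nat) \<Rightarrow> nat \<Rightarrow> 'a \<Rightarrow> real" where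
  "jps_W H n R r \<omega> = (if jps_N n R r \<omega> > 0 then 1 else 0) / real (jps_d H n R \<omega>)"

definition jps_Fr :: "nat \<Rightarrow> (real \<Rightarrow> real) \<Rightarrow> (nat \<Rightarrow> 'a \<Rightarrow> real) \<Rightarrow> (nat \<Rightarrow> 'a \<Rightarrow> nat)
    \<Rightarrow> nat \<Rightarrow> real \<Rightarrow> 'a \<Rightarrow> real" where
  "jps_Fr n K X R r t \<omega> =
     (if jps_N n R r \<omega> > 0
      then (1 / real (jps_N n R r \<omega>)) * (\<Sum>i<n. K (t - X i \<omega>) * jps_I R i r \<omega>)
      else 0)"

definition jps_F :: "nat \<Rightarrow> nat \<Rightarrow> (real \<Rightarrow> real) \<Rightarrow> (nat \<Rightarrow> 'a \<Rightarrow> real) \<Rightarrow> (nat \<Rightarrow> 'a \<Rightarrow> nat)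
    \<Rightarrow> real \<Rightarrow> 'a \<Rightarrow> real" where
  "jps_F H n K X R t \<omega> = (\<Sum>r=1..H. jps_W H n R r \<omega> * jps_Fr n K X R r t \<omega>)"

end

theory Submission
  imports Defs
begin

text \<open>Conditionally on its rank vector \<rho> = (R_1, ..., R_n), which is uniform on {1..H}^n,
  a JPS sample consists of independent observations X_i with laws \<mu> \<rho>_i, and
  F_{n;jps}(t) = \<Sum>_i K(t - X_i) W_{R_i} J_{R_i}. Computing E F and E F^2 conditionally on \<rho>
  expresses Var F through averages over \<rho>: a within-strata part \<Sum>_r W_r^2 J_r Var_r and the
  between-strata part Var(\<Sum>_r W_r m_r), where m_r and Var_r are the mean and variance of
  K(t - X_[r]). These averages are invariant under relabelling the ranks, so E(W_r^2 J_r) and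
  E(W_r^2) do not depend on r, and E(W_r W_s) for r \<noteq> s is forced by \<Sum>_r W_r = 1; this gives
  the first formula. Consistency makes the law of X the equal mixture of the \<mu> r, whence
  H Var K(t - X) = \<Sum>_r Var_r + \<Sum>_r (m_r - m)^2 with m = E K(t - X), which turns the first
  formula into the second.\<close>

lemma is_cdf_nonneg:
  assumes "is_cdf K" shows "0 \<le> K x"
proof (rule tendsto_le[of at_bot "\<lambda>_. K x" "K x" K 0])
  show "\<forall>\<^sub>F y in at_bot. K y \<le> K x"
    using assms unfolding is_cdf_def mono_def eventually_at_bot_linorder by blast
qed (use assms in \<open>auto simp: is_cdf_def\<close>)

lemma is_cdf_le_1:
  assumes "is_cdf K" shows "K x \<le> 1"
proof (rule tendsto_le[of at_top K 1 "\<lambda>_. K x" "K x"])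
  show "\<forall>\<^sub>F y in at_top. K x \<le> K y"
    using assms unfolding is_cdf_def mono_def eventually_at_top_linorder by blast
qed (use assms in \<open>auto simp: is_cdf_def\<close>)

lemma is_cdf_borel_measurable: "is_cdf K \<Longrightarrow> K \<in> borel_measurable borel"
  by (auto simp: is_cdf_def intro: borel_measurable_mono)

lemma borel_measurable_real_distribution:
  assumes "real_distribution N" "f \<in> borel_measurable borel"
  shows "f \<in> borel_measurable N"
  by (subst measurable_cong_sets[OF real_distribution.events_eq_borel[OF assms(1)] refl])
    (rule assms(2))

lemma integrable_power_is_cdf:
  assumes "finite_measure N" "is_cdf K" "f \<in> borel_measurable N"
  shows "integrable N (\<lambda>x. K (f x) ^ e)"
proof (rule finite_measure.integrable_const_bound[where B=1])
  show "AE x in N. norm (K (f x) ^ e) \<le> 1"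
    using is_cdf_nonneg[OF assms(2)] is_cdf_le_1[OF assms(2)] by (auto intro!: power_le_one)
  show "(\<lambda>x. K (f x) ^ e) \<in> borel_measurable N"
    using is_cdf_borel_measurable[OF assms(2)] assms(3) by measurable
qed fact

lemma variance_is_cdf:
  assumes "prob_space N" "is_cdf K" "f \<in> borel_measurable N"
  shows "prob_space.variance N (\<lambda>x. K (f x)) =
           integral\<^sup>L N (\<lambda>x. K (f x) ^ 2) - (integral\<^sup>L N (\<lambda>x. K (f x)))\<^sup>2"
proof -
  interpret N: prob_space N by fact
  show ?thesis
    using integrable_power_is_cdf[OF N.finite_measure_axioms assms(2,3), of 1]
      integrable_power_is_cdf[OF N.finite_measure_axioms assms(2,3), of 2]
    by (subst N.variance_eq) auto
qed

lemma sum_sq_deviation: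
  fixes m :: "'a \<Rightarrow> real"
  assumes "finite A" "A \<noteq> {}"
  shows "(\<Sum>r\<in>A. (m r - (\<Sum>s\<in>A. m s) / card A)\<^sup>2)
       = (\<Sum>r\<in>A. (m r)\<^sup>2) - (\<Sum>s\<in>A. m s)\<^sup>2 / card A"
proof -
  define a where "a = (\<Sum>s\<in>A. m s) / card A"
  have "(\<Sum>r\<in>A. (m r - a)\<^sup>2) = (\<Sum>r\<in>A. (m r)\<^sup>2 - 2 * a * m r + a\<^sup>2)"
    by (simp add: power2_diff algebra_simps)
  also have "\<dots> = (\<Sum>r\<in>A. (m r)\<^sup>2) - 2 * a * (\<Sum>r\<in>A. m r) + card A * a\<^sup>2"
    by (simp add: sum.distrib sum_subtractf sum_distrib_left)
  finally show ?thesis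
    using assms by (simp add: a_def field_simps power2_eq_square)
qed

lemma double_sum_diag_split:
  fixes a m v :: "'a \<Rightarrow> real"
  assumes "finite A"
  shows "(\<Sum>i\<in>A. \<Sum>j\<in>A. a i * a j * (if i = j then v i else m i * m j))
       = (\<Sum>i\<in>A. (a i)\<^sup>2 * (v i - (m i)\<^sup>2)) + (\<Sum>i\<in>A. a i * m i)\<^sup>2"
proof -
  have "(\<Sum>i\<in>A. \<Sum>j\<in>A. a i * a j * (if i = j then v i else m i * m j))
      = (\<Sum>i\<in>A. \<Sum>j\<in>A. (a i * m i) * (a j * m j) + (if i = j then (a i)\<^sup>2 * (v i - (m i)\<^sup>2) else 0))"
    by (intro sum.cong refl) (auto simp: power2_eq_square algebra_simps)
  also have "\<dots> = (\<Sum>i\<in>A. a i * m i)\<^sup>2 + (\<Sum>i\<in>A. (a i)\<^sup>2 * (v i - (m i)\<^sup>2))"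
    using assms by (simp add: sum.distrib power2_eq_square sum_product)
  finally show ?thesis by simp
qed

lemma weighted_means_variance_identity:
  fixes h c q S S2 :: real
  assumes "h > 1" "c = (1 / h - q) / (h - 1)"
  shows "c * S\<^sup>2 + (q - c) * S2 - (S / h)\<^sup>2 = h / (h - 1) * (q - (1 / h)\<^sup>2) * (S2 - S\<^sup>2 / h)"
proof -
  have "q * S2 + c * (S\<^sup>2 - S2) - (S / h)\<^sup>2 = h / (h - 1) * (q - (1 / h)\<^sup>2) * (S2 - S\<^sup>2 / h)"
    using assms(1) unfolding assms(2) by (simp add: field_simps power2_eq_square)
  then show ?thesis by (simp add: algebra_simps)
qed

lemma prod_two_deltas:
  assumes "finite S" "i \<in> S" "j \<in> S" "i \<noteq> j"
  shows "(\<Prod>k\<in>S. if k = i then a k else if k = j then b k else 1) = a i * (b j :: real)"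
proof -
  have "(\<Prod>k\<in>S. if k = i then a k else if k = j then b k else 1)
      = (\<Prod>k\<in>S. (if k = i then a k else 1) * (if k = j then b k else 1))"
    using assms(4) by (intro prod.cong) auto
  then show ?thesis using assms(1-3) by (simp add: prod.distrib prod.delta)
qed

lemma jps_Fr_eq: "jps_Fr n K X R r t \<omega> = jps_J n R r \<omega> * (\<Sum>i<n. K (t - X i \<omega>) * jps_I R i r \<omega>)"
  by (simp add: jps_Fr_def jps_J_def)

lemma jps_F_eq_sum_obs:
  assumes "\<And>i. i < n \<Longrightarrow> R i \<omega> \<in> {1..H}"
  shows "jps_F H n K X R t \<omega>
       = (\<Sum>i<n. K (t - X i \<omega>) * (jps_W H n R (R i \<omega>) \<omega> * jps_J n R (R i \<omega>) \<omega>))"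
proof -
  have "jps_F H n K X R t \<omega>
      = (\<Sum>r=1..H. \<Sum>i<n. K (t - X i \<omega>) *
           (if R i \<omega> = r then jps_W H n R r \<omega> * jps_J n R r \<omega> else 0))"
    unfolding jps_F_def jps_Fr_eq jps_I_def
    by (auto simp: sum_distrib_left intro!: sum.cong)
  also have "\<dots> = (\<Sum>i<n. \<Sum>r=1..H. K (t - X i \<omega>) *
           (if R i \<omega> = r then jps_W H n R r \<omega> * jps_J n R r \<omega> else 0))"
    by (rule sum.swap)
  also have "\<dots> = (\<Sum>i<n. K (t - X i \<omega>) * (jps_W H n R (R i \<omega>) \<omega> * jps_J n R (R i \<omega>) \<omega>))"
    using assms by (intro sum.cong refl) (simp add: sum_distrib_left[symmetric] sum.delta')
  finally show ?thesis .
qed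

section \<open>Rank vectors and the JPS weights\<close>

text \<open>For a fixed rank vector \<rho> (the ranks of observations 0, ..., n - 1), rv_N, rv_d, rv_W and
  rv_J are the paper's N_r, d_n, W_r and J_r; obs_weight \<rho> i = W_{\<rho> i} J_{\<rho> i} is the weight of
  observation i in the estimator, and rv_avg averages over the H^n equally likely rank vectors.\<close>

context
  fixes H n :: nat
begin

definition rank_vectors :: "(nat \<Rightarrow> nat) set" where
  "rank_vectors = PiE {..<n} (\<lambda>_. {1..H})"

definition rv_N :: "(nat \<Rightarrow> nat) \<Rightarrow> nat \<Rightarrow> nat" where
  "rv_N \<rho> r = card {i. i < n \<and> \<rho> i = r}"

definition rv_d :: "(nat \<Rightarrow> nat) \<Rightarrow> nat" where
  "rv_d \<rho> = card {r \<in> {1..H}. rv_N \<rho> r > 0}"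

definition rv_W :: "(nat \<Rightarrow> nat) \<Rightarrow> nat \<Rightarrow> real" where
  "rv_W \<rho> r = (if rv_N \<rho> r > 0 then 1 else 0) / real (rv_d \<rho>)"

definition rv_J :: "(nat \<Rightarrow> nat) \<Rightarrow> nat \<Rightarrow> real" where
  "rv_J \<rho> r = (if rv_N \<rho> r > 0 then 1 / real (rv_N \<rho> r) else 0)"

definition rv_avg :: "((nat \<Rightarrow> nat) \<Rightarrow> real) \<Rightarrow> real" where
  "rv_avg f = (\<Sum>\<rho>\<in>rank_vectors. f \<rho>) / real H ^ n"

definition obs_weight :: "(nat \<Rightarrow> nat) \<Rightarrow> nat \<Rightarrow> real" where
  "obs_weight \<rho> i = rv_W \<rho> (\<rho> i) * rv_J \<rho> (\<rho> i)"

text \<open>The value undefined outside {..<n} keeps relabelled vectors inside the extensional set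
  rank_vectors.\<close>

definition relabel :: "(nat \<Rightarrow> nat) \<Rightarrow> (nat \<Rightarrow> nat) \<Rightarrow> nat \<Rightarrow> nat" where
  "relabel \<tau> \<rho> = (\<lambda>i. if i < n then \<tau> (\<rho> i) else undefined)"

lemma finite_rank_vectors: "finite rank_vectors"
  by (simp add: rank_vectors_def finite_PiE)

lemma card_rank_vectors: "card rank_vectors = H ^ n"
  by (simp add: rank_vectors_def card_PiE)

lemma rank_vectorsD: "\<rho> \<in> rank_vectors \<Longrightarrow> i < n \<Longrightarrow> \<rho> i \<in> {1..H}"
  by (auto simp: rank_vectors_def PiE_iff)

lemma rv_N_eq_0_iff: "rv_N \<rho> r = 0 \<longleftrightarrow> (\<forall>i<n. \<rho> i \<noteq> r)"
  by (auto simp: rv_N_def)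

lemma rv_W_eq_0: "rv_N \<rho> r = 0 \<Longrightarrow> rv_W \<rho> r = 0"
  by (simp add: rv_W_def)

lemma sum_by_rank:
  assumes "\<rho> \<in> rank_vectors"
  shows "(\<Sum>i<n. g (\<rho> i)) = (\<Sum>r=1..H. real (rv_N \<rho> r) * (g r :: real))"
proof -
  have "(\<Sum>i<n. g (\<rho> i)) = (\<Sum>r=1..H. \<Sum>i\<in>{i \<in> {..<n}. \<rho> i = r}. g (\<rho> i))"
    using rank_vectorsD[OF assms] by (intro sum.group[symmetric]) auto
  also have "\<dots> = (\<Sum>r=1..H. real (rv_N \<rho> r) * g r)"
    by (intro sum.cong refl) (simp add: rv_N_def conj_commute)
  finally show ?thesis .
qed

lemma sum_obs_weight:
  assumes "\<rho> \<in> rank_vectors"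
  shows "(\<Sum>i<n. obs_weight \<rho> i * v (\<rho> i)) = (\<Sum>r=1..H. rv_W \<rho> r * v r)"
proof -
  have "real (rv_N \<rho> r) * (rv_W \<rho> r * rv_J \<rho> r * v r) = rv_W \<rho> r * v r" for r
    by (cases "rv_N \<rho> r = 0") (simp_all add: rv_W_eq_0 rv_J_def)
  then show ?thesis
    by (simp only: obs_weight_def sum_by_rank[OF assms, of "\<lambda>r. rv_W \<rho> r * rv_J \<rho> r * v r"])
qed

lemma sum_sq_obs_weight:
  assumes "\<rho> \<in> rank_vectors"
  shows "(\<Sum>i<n. (obs_weight \<rho> i)\<^sup>2 * v (\<rho> i))
       = (\<Sum>r=1..H. (rv_W \<rho> r)\<^sup>2 * rv_J \<rho> r * v r)"
proof -
  have "real (rv_N \<rho> r) * ((rv_W \<rho> r * rv_J \<rho> r)\<^sup>2 * v r) = (rv_W \<rho> r)\<^sup>2 * rv_J \<rho> r * v r"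
    for r
    by (cases "rv_N \<rho> r = 0") (simp_all add: rv_W_eq_0 rv_J_def power2_eq_square)
  then show ?thesis
    by (simp only: obs_weight_def sum_by_rank[OF assms, of "\<lambda>r. (rv_W \<rho> r * rv_J \<rho> r)\<^sup>2 * v r"])
qed

lemma rv_d_pos:
  assumes "n \<ge> 1" "\<rho> \<in> rank_vectors"
  shows "rv_d \<rho> > 0"
proof -
  have "\<rho> 0 \<in> {1..H}" "rv_N \<rho> (\<rho> 0) \<noteq> 0"
    using rank_vectorsD[OF assms(2)] assms(1) rv_N_eq_0_iff[of \<rho> "\<rho> 0"] by auto
  then have "\<rho> 0 \<in> {r \<in> {1..H}. rv_N \<rho> r > 0}" by simp
  then show ?thesis unfolding rv_d_def by (subst card_gt_0_iff) auto
qed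

lemma sum_rv_W:
  assumes "n \<ge> 1" "\<rho> \<in> rank_vectors"
  shows "(\<Sum>r=1..H. rv_W \<rho> r) = 1"
proof -
  have "(\<Sum>r=1..H. (if rv_N \<rho> r > 0 then 1 else 0) :: real) = real (rv_d \<rho>)"
    by (simp add: sum.If_cases rv_d_def Int_def conj_commute)
  then show ?thesis
    using rv_d_pos[OF assms] by (simp add: rv_W_def flip: sum_divide_distrib)
qed

context
  fixes \<tau> :: "nat \<Rightarrow> nat"
  assumes \<tau>: "\<tau> permutes {1..H}"
begin

lemma rv_N_relabel: "rv_N (relabel \<tau> \<rho>) (\<tau> r) = rv_N \<rho> r"
proof -
  have "{i. i < n \<and> relabel \<tau> \<rho> i = \<tau> r} = {i. i < n \<and> \<rho> i = r}"
    using permutes_inj[OF \<tau>] by (auto simp: relabel_def inj_eq)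
  then show ?thesis by (simp add: rv_N_def)
qed

lemma rv_d_relabel: "rv_d (relabel \<tau> \<rho>) = rv_d \<rho>"
proof -
  have "{r \<in> {1..H}. rv_N (relabel \<tau> \<rho>) r > 0} = \<tau> ` {r \<in> {1..H}. rv_N \<rho> r > 0}"
  proof (intro equalityI subsetI)
    fix r assume r: "r \<in> {r \<in> {1..H}. rv_N (relabel \<tau> \<rho>) r > 0}"
    have "\<tau> (inv \<tau> r) = r"
      by (rule permutes_inverses(1)[OF \<tau>])
    moreover have "inv \<tau> r \<in> {1..H}"
      using r permutes_in_image[OF permutes_inv[OF \<tau>]] by blast
    moreover have "rv_N \<rho> (inv \<tau> r) > 0"
      using r rv_N_relabel[of \<rho> "inv \<tau> r"] calculation(1) by simp
    ultimately show "r \<in> \<tau> ` {r \<in> {1..H}. rv_N \<rho> r > 0}"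
      by (metis (mono_tags, lifting) image_eqI mem_Collect_eq)
  next
    fix r assume "r \<in> \<tau> ` {r \<in> {1..H}. rv_N \<rho> r > 0}"
    then obtain r0 where "r = \<tau> r0" "r0 \<in> {1..H}" "rv_N \<rho> r0 > 0" by blast
    then show "r \<in> {r \<in> {1..H}. rv_N (relabel \<tau> \<rho>) r > 0}"
      using permutes_in_image[OF \<tau>, of r0] by (simp add: rv_N_relabel)
  qed
  moreover have "inj_on \<tau> {r \<in> {1..H}. rv_N \<rho> r > 0}"
    using permutes_inj[OF \<tau>] by (auto intro: inj_on_subset)
  ultimately show ?thesis by (simp add: rv_d_def card_image)
qed

lemma rv_W_relabel: "rv_W (relabel \<tau> \<rho>) (\<tau> r) = rv_W \<rho> r"
  by (simp add: rv_W_def rv_N_relabel rv_d_relabel)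

lemma rv_J_relabel: "rv_J (relabel \<tau> \<rho>) (\<tau> r) = rv_J \<rho> r"
  by (simp add: rv_J_def rv_N_relabel)

lemma bij_betw_relabel: "bij_betw (relabel \<tau>) rank_vectors rank_vectors"
proof (rule bij_betwI[where g = "relabel (inv \<tau>)"])
  have into: "relabel \<sigma> \<in> rank_vectors \<rightarrow> rank_vectors" if "\<sigma> permutes {1..H}" for \<sigma>
    using permutes_in_image[OF that]
    by (auto simp: rank_vectors_def relabel_def PiE_iff extensional_def)
  show "relabel \<tau> \<in> rank_vectors \<rightarrow> rank_vectors" by (rule into[OF \<tau>])
  show "relabel (inv \<tau>) \<in> rank_vectors \<rightarrow> rank_vectors" by (rule into[OF permutes_inv[OF \<tau>]])
  have inverse: "relabel \<sigma> (relabel \<sigma>' \<rho>) = \<rho>"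
    if "\<rho> \<in> rank_vectors" "\<And>x. \<sigma> (\<sigma>' x) = x" for \<sigma> \<sigma>' \<rho>
  proof
    fix i show "relabel \<sigma> (relabel \<sigma>' \<rho>) i = \<rho> i"
      using that PiE_arb[of \<rho> "{..<n}" "\<lambda>_. {1..H}" i]
      by (cases "i < n") (simp_all add: relabel_def rank_vectors_def)
  qed
  show "relabel (inv \<tau>) (relabel \<tau> \<rho>) = \<rho>" if "\<rho> \<in> rank_vectors" for \<rho>
    by (rule inverse[where \<sigma>="inv \<tau>" and \<sigma>'=\<tau>, OF that permutes_inverses(2)[OF \<tau>]])
  show "relabel \<tau> (relabel (inv \<tau>) \<rho>) = \<rho>" if "\<rho> \<in> rank_vectors" for \<rho>
    by (rule inverse[where \<sigma>=\<tau> and \<sigma>'="inv \<tau>", OF that permutes_inverses(1)[OF \<tau>]])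
qed

lemma sum_rank_vectors_permute:
  "(\<Sum>\<rho>\<in>rank_vectors. g (\<lambda>r. rv_W \<rho> (\<tau> r)) (\<lambda>r. rv_J \<rho> (\<tau> r)))
     = (\<Sum>\<rho>\<in>rank_vectors. g (rv_W \<rho>) (rv_J \<rho>))"
  using sum.reindex_bij_betw[OF bij_betw_relabel,
      of "\<lambda>\<rho>. g (\<lambda>r. rv_W \<rho> (\<tau> r)) (\<lambda>r. rv_J \<rho> (\<tau> r))"]
  by (simp add: rv_W_relabel rv_J_relabel)

end

lemma sum_rank_vectors_swap_rank:
  assumes "r \<in> {1..H}" "s \<in> {1..H}"
  shows "(\<Sum>\<rho>\<in>rank_vectors. f (rv_W \<rho> r) (rv_J \<rho> r))
       = (\<Sum>\<rho>\<in>rank_vectors. f (rv_W \<rho> s) (rv_J \<rho> s))"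
  using sum_rank_vectors_permute[OF permutes_swap_id[OF assms],
      of "\<lambda>W J. f (W r) (J r)"]
  by simp

lemma sum_rank_vectors_swap_pair:
  assumes "r \<in> {1..H}" "s \<in> {1..H}" "r \<noteq> s" "r' \<in> {1..H}" "s' \<in> {1..H}" "r' \<noteq> s'"
  shows "(\<Sum>\<rho>\<in>rank_vectors. f (rv_W \<rho> r) (rv_W \<rho> s))
       = (\<Sum>\<rho>\<in>rank_vectors. f (rv_W \<rho> r') (rv_W \<rho> s'))"
proof -
  define u where "u = Transposition.transpose r r' s"
  define \<tau> where "\<tau> = Transposition.transpose u s' \<circ> Transposition.transpose r r'"
  have u: "u \<in> {1..H}" "u \<noteq> r'"
    using assms by (auto simp: u_def Transposition.transpose_def)
  have "\<tau> permutes {1..H}"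
    unfolding \<tau>_def using assms u by (intro permutes_compose permutes_swap_id) auto
  moreover have "\<tau> r = r'" "\<tau> s = s'"
    using assms u by (auto simp: \<tau>_def u_def Transposition.transpose_def)
  ultimately show ?thesis
    using sum_rank_vectors_permute[of \<tau> "\<lambda>W J. f (W r) (W s)"] by simp
qed

lemma rv_avg_swap_rank:
  assumes "r \<in> {1..H}" "s \<in> {1..H}"
  shows "rv_avg (\<lambda>\<rho>. f (rv_W \<rho> r) (rv_J \<rho> r)) = rv_avg (\<lambda>\<rho>. f (rv_W \<rho> s) (rv_J \<rho> s))"
  unfolding rv_avg_def by (simp only: sum_rank_vectors_swap_rank[OF assms, of f])

lemma rv_avg_sum: "rv_avg (\<lambda>\<rho>. \<Sum>r\<in>A. f \<rho> r) = (\<Sum>r\<in>A. rv_avg (\<lambda>\<rho>. f \<rho> r))"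
  unfolding rv_avg_def by (subst sum.swap) (simp add: sum_divide_distrib)

lemma rv_avg_cong: "(\<And>\<rho>. \<rho> \<in> rank_vectors \<Longrightarrow> f \<rho> = g \<rho>) \<Longrightarrow> rv_avg f = rv_avg g"
  by (simp add: rv_avg_def)

lemma rv_avg_add: "rv_avg (\<lambda>\<rho>. f \<rho> + g \<rho>) = rv_avg f + rv_avg g"
  by (simp add: rv_avg_def sum.distrib add_divide_distrib)

lemma rv_avg_mult_right: "rv_avg (\<lambda>\<rho>. f \<rho> * c) = rv_avg f * c"
  by (simp add: rv_avg_def sum_distrib_right)

lemma rv_avg_W:
  assumes "H \<ge> 1" "n \<ge> 1" "r \<in> {1..H}"
  shows "rv_avg (\<lambda>\<rho>. rv_W \<rho> r) = 1 / real H"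
proof -
  have "1 = rv_avg (\<lambda>\<rho>. \<Sum>s=1..H. rv_W \<rho> s)"
    using assms(1,2) sum_rv_W by (simp add: rv_avg_def card_rank_vectors cong: sum.cong)
  also have "\<dots> = (\<Sum>s=1..H. rv_avg (\<lambda>\<rho>. rv_W \<rho> r))"
    unfolding rv_avg_sum using rv_avg_swap_rank[OF _ assms(3), of _ "\<lambda>w _. w"]
    by (intro sum.cong) auto
  finally show ?thesis using assms(1) by (simp add: field_simps)
qed

text \<open>Since the weights sum to one, the mixed moments of two distinct weights are determined
  by the second moment of a single weight.\<close>

lemma rv_avg_W_W:
  assumes "H \<ge> 2" "n \<ge> 1" "r \<in> {1..H}" "s \<in> {1..H}" "r \<noteq> s"
  shows "rv_avg (\<lambda>\<rho>. rv_W \<rho> r * rv_W \<rho> s)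
       = (1 / real H - rv_avg (\<lambda>\<rho>. (rv_W \<rho> 1)\<^sup>2)) / (real H - 1)"
proof -
  define q where "q = rv_avg (\<lambda>\<rho>. (rv_W \<rho> 1)\<^sup>2)"
  define c where "c = rv_avg (\<lambda>\<rho>. rv_W \<rho> r * rv_W \<rho> s)"
  have one: "1 \<in> {1..H}" using assms(1) by simp
  have mixed: "rv_avg (\<lambda>\<rho>. rv_W \<rho> 1 * rv_W \<rho> s') = c" if "s' \<in> {1..H}" "s' \<noteq> 1" for s'
    unfolding c_def rv_avg_def
    by (simp only: sum_rank_vectors_swap_pair[OF one that(1) that(2)[symmetric] assms(3-5), of "(*)"])
  have "1 / real H = rv_avg (\<lambda>\<rho>. rv_W \<rho> 1 * (\<Sum>s'=1..H. rv_W \<rho> s'))"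
    using rv_avg_W[OF _ assms(2) one] assms(1,2) sum_rv_W
    by (simp add: rv_avg_def cong: sum.cong)
  also have "\<dots> = (\<Sum>s'=1..H. rv_avg (\<lambda>\<rho>. rv_W \<rho> 1 * rv_W \<rho> s'))"
    by (simp add: sum_distrib_left rv_avg_sum)
  also have "\<dots> = (\<Sum>s'=1..H. if s' = 1 then q else c)"
    using mixed by (intro sum.cong) (auto simp: q_def power2_eq_square)
  also have "\<dots> = q + (real H - 1) * c"
    using one by (simp add: sum.If_cases Diff_eq[symmetric] card_Diff_singleton)
  finally have "c = (1 / real H - q) / (real H - 1)"
    using assms(1) by (simp add: field_simps)
  then show ?thesis by (simp add: c_def q_def)
qed

lemma rv_avg_weighted_means:
  assumes "H \<ge> 1" "n \<ge> 1"
  shows "rv_avg (\<lambda>\<rho>. \<Sum>r=1..H. rv_W \<rho> r * m r) = (\<Sum>r=1..H. m r) / real H"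
  using rv_avg_W[OF assms]
  by (simp add: rv_avg_sum rv_avg_mult_right sum_divide_distrib)

lemma rv_avg_weighted_means_sq:
  assumes "H \<ge> 2" "n \<ge> 1"
  shows "rv_avg (\<lambda>\<rho>. (\<Sum>r=1..H. rv_W \<rho> r * m r)\<^sup>2)
           - (rv_avg (\<lambda>\<rho>. \<Sum>r=1..H. rv_W \<rho> r * m r))\<^sup>2
       = real H / (real H - 1) * (rv_avg (\<lambda>\<rho>. (rv_W \<rho> 1)\<^sup>2) - (1 / real H)\<^sup>2)
           * (\<Sum>r=1..H. (m r - (\<Sum>s=1..H. m s) / real H)\<^sup>2)"
proof -
  define q where "q = rv_avg (\<lambda>\<rho>. (rv_W \<rho> 1)\<^sup>2)"
  define c where "c = (1 / real H - q) / (real H - 1)"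
  define S where "S = (\<Sum>r=1..H. m r)"
  define S2 where "S2 = (\<Sum>r=1..H. (m r)\<^sup>2)"
  have moment: "rv_avg (\<lambda>\<rho>. rv_W \<rho> r * rv_W \<rho> s) = (if r = s then q else c)"
    if "r \<in> {1..H}" "s \<in> {1..H}" for r s
    using rv_avg_W_W[OF assms that] rv_avg_swap_rank[OF that(1), of 1 "\<lambda>w _. w\<^sup>2"] assms(1)
    by (auto simp: q_def c_def power2_eq_square)
  have "(\<Sum>r=1..H. rv_W \<rho> r * m r)\<^sup>2
      = (\<Sum>r=1..H. \<Sum>s=1..H. rv_W \<rho> r * rv_W \<rho> s * (m r * m s))" for \<rho>
    by (simp add: power2_eq_square sum_product mult_ac)
  then have "rv_avg (\<lambda>\<rho>. (\<Sum>r=1..H. rv_W \<rho> r * m r)\<^sup>2)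
      = (\<Sum>r=1..H. \<Sum>s=1..H. rv_avg (\<lambda>\<rho>. rv_W \<rho> r * rv_W \<rho> s) * (m r * m s))"
    by (simp add: rv_avg_sum rv_avg_mult_right)
  also have "\<dots> = (\<Sum>r=1..H. \<Sum>s=1..H. c * (m r * m s) + (if r = s then (q - c) * (m r)\<^sup>2 else 0))"
    using moment by (intro sum.cong refl) (auto simp: power2_eq_square algebra_simps)
  also have "\<dots> = c * S\<^sup>2 + (q - c) * S2"
    by (simp add: sum.distrib sum_distrib_left[symmetric] S_def S2_def power2_eq_square
        sum_product)
  finally have second: "rv_avg (\<lambda>\<rho>. (\<Sum>r=1..H. rv_W \<rho> r * m r)\<^sup>2) = c * S\<^sup>2 + (q - c) * S2" .
  have first: "rv_avg (\<lambda>\<rho>. \<Sum>r=1..H. rv_W \<rho> r * m r) = S / real H"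
    using rv_avg_weighted_means[of m] assms by (simp add: S_def)
  have deviation: "(\<Sum>r=1..H. (m r - S / real H)\<^sup>2) = S2 - S\<^sup>2 / real H"
    using sum_sq_deviation[of "{1..H}" m] assms(1) by (simp add: S_def S2_def)
  have "c * S\<^sup>2 + (q - c) * S2 - (S / real H)\<^sup>2
      = real H / (real H - 1) * (q - (1 / real H)\<^sup>2) * (S2 - S\<^sup>2 / real H)"
    using weighted_means_variance_identity[of "real H" c q S S2] assms(1) c_def by simp
  then show ?thesis
    unfolding second first deviation q_def[symmetric] S_def[symmetric] .
qed

lemma rv_avg_W_sq_J_weighted:
  assumes "H \<ge> 1"
  shows "rv_avg (\<lambda>\<rho>. \<Sum>r=1..H. (rv_W \<rho> r)\<^sup>2 * rv_J \<rho> r * v r)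
       = rv_avg (\<lambda>\<rho>. (rv_W \<rho> 1)\<^sup>2 * rv_J \<rho> 1) * (\<Sum>r=1..H. v r)"
proof -
  have "rv_avg (\<lambda>\<rho>. (rv_W \<rho> r)\<^sup>2 * rv_J \<rho> r * v r)
      = rv_avg (\<lambda>\<rho>. (rv_W \<rho> 1)\<^sup>2 * rv_J \<rho> 1) * v r" if "r \<in> {1..H}" for r
    using rv_avg_swap_rank[OF that, of 1 "\<lambda>w j. w\<^sup>2 * j"] assms
    by (simp only: rv_avg_mult_right) simp
  then show ?thesis by (simp add: rv_avg_sum sum_distrib_left)
qed

end

section \<open>Conditioning on the ranks\<close>

locale jps_sample = prob_space M for M :: "'a measure" +
  fixes H n :: nat
    and X :: "nat \<Rightarrow> 'a \<Rightarrow> real" and R :: "nat \<Rightarrow> 'a \<Rightarrow> nat"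
    and \<mu> :: "nat \<Rightarrow> real measure" and \<mu>X :: "real measure"
    and K :: "real \<Rightarrow> real" and t :: real
  assumes H: "H \<ge> 2" and n: "n \<ge> 1"
    and dist_r: "\<And>r. r \<in> {1..H} \<Longrightarrow> real_distribution (\<mu> r)"
    and distX: "real_distribution \<mu>X"
    and consistent: "\<And>s. cdf \<mu>X s = (1 / real H) * (\<Sum>r=1..H. cdf (\<mu> r) s)"
    and indep: "indep_vars (\<lambda>i. borel \<Otimes>\<^sub>M count_space UNIV)
                   (\<lambda>i \<omega>. (X i \<omega>, R i \<omega>)) {..<n}"
    and R_range: "\<And>i \<omega>. i < n \<Longrightarrow> \<omega> \<in> space M \<Longrightarrow> R i \<omega> \<in> {1..H}"
    and R_unif: "\<And>i r. i < n \<Longrightarrow> r \<in> {1..H} \<Longrightarrow>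
                   measure M {\<omega> \<in> space M. R i \<omega> = r} = 1 / real H"
    and X_cond: "\<And>i r s. i < n \<Longrightarrow> r \<in> {1..H} \<Longrightarrow>
                   measure M {\<omega> \<in> space M. X i \<omega> \<le> s \<and> R i \<omega> = r}
                   = cdf (\<mu> r) s * (1 / real H)"
    and K: "is_cdf K"
begin

lemma K_measurable[measurable]: "K \<in> borel_measurable borel"
  using is_cdf_borel_measurable[OF K] .

lemma pair_measurable: "i < n \<Longrightarrow> (\<lambda>\<omega>. (X i \<omega>, R i \<omega>)) \<in> M \<rightarrow>\<^sub>M borel \<Otimes>\<^sub>M count_space UNIV"
  using indep by (auto simp: indep_vars_def)

lemma X_measurable[measurable]: "i < n \<Longrightarrow> X i \<in> borel_measurable M"
  using measurable_compose[OF pair_measurable measurable_fst] by (simp add: comp_def)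

lemma R_measurable[measurable]: "i < n \<Longrightarrow> R i \<in> M \<rightarrow>\<^sub>M count_space UNIV"
  using measurable_compose[OF pair_measurable measurable_snd] by (simp add: comp_def)

lemma prob_space_stratum: "r \<in> {1..H} \<Longrightarrow> prob_space (\<mu> r)"
  using dist_r by (simp add: real_distribution_def)

lemma integrable_stratum_const: "r \<in> {1..H} \<Longrightarrow> integrable (\<mu> r) (\<lambda>_. c :: real)"
  using prob_space_stratum by (simp add: prob_space.finite_measure finite_measure.integrable_const)

lemma H_pos: "real H > 0"
  using H by simp

lemma stratum_law:
  assumes k: "k < n" and r: "r \<in> {1..H}"
  defines "Q \<equiv> density M (\<lambda>\<omega>. if R k \<omega> = r then real H else 0)"
  shows "prob_space Q" and "distr Q borel (X k) = \<mu> r"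
proof -
  define S where "S = {\<omega> \<in> space M. R k \<omega> = r}"
  have S[measurable]: "S \<in> sets M" unfolding S_def using k by measurable
  have emeasure_Q: "emeasure Q A = ennreal (real H * measure M (A \<inter> S))" if "A \<in> sets M" for A
  proof -
    have "emeasure Q A = (\<integral>\<^sup>+ \<omega>. ennreal (real H) * indicator (A \<inter> S) \<omega> \<partial>M)"
      unfolding Q_def using that k
      by (subst emeasure_density) (auto intro!: nn_integral_cong simp: S_def indicator_def)
    also have "\<dots> = ennreal (real H * measure M (A \<inter> S))"
      using that by (simp add: nn_integral_cmult_indicator emeasure_eq_measure ennreal_mult)
    finally show ?thesis .
  qed
  have "emeasure Q (space Q) = 1"
    using emeasure_Q[of "space M"] R_unif[OF k r] H_pos
    by (simp add: Q_def S_def Int_absorb1)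
  then show Q: "prob_space Q" by (rule prob_spaceI)
  have "cdf (distr Q borel (X k)) s = cdf (\<mu> r) s" for s
  proof -
    have "cdf (distr Q borel (X k)) s = measure Q (X k -` {..s} \<inter> space M)"
      using k by (simp add: cdf_def measure_distr Q_def)
    also have "\<dots> = real H * measure M (X k -` {..s} \<inter> space M \<inter> S)"
      using emeasure_Q[of "X k -` {..s} \<inter> space M"] k H_pos by (simp add: measure_def)
    also have "X k -` {..s} \<inter> space M \<inter> S = {\<omega> \<in> space M. X k \<omega> \<le> s \<and> R k \<omega> = r}"
      by (auto simp: S_def)
    finally show ?thesis
      using X_cond[OF k r, of s] H_pos by simp
  qed
  moreover have "real_distribution (distr Q borel (X k))"
    using prob_space.prob_space_distr[OF Q, of "X k" borel] k
    by (simp add: real_distribution_def real_distribution_axioms_def Q_def)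
  ultimately show "distr Q borel (X k) = \<mu> r"
    using dist_r[OF r] by (intro cdf_unique) auto
qed

lemma stratum_integral:
  assumes k: "k < n" and r: "r \<in> {1..H}"
    and g[measurable]: "g \<in> borel_measurable borel" and int: "integrable (\<mu> r) g"
  shows "integrable M (\<lambda>\<omega>. if R k \<omega> = r then g (X k \<omega>) else 0)"
    and "(\<integral>\<omega>. (if R k \<omega> = r then g (X k \<omega>) else 0) \<partial>M) = integral\<^sup>L (\<mu> r) g / real H"
proof -
  define \<delta> where "\<delta> \<omega> = (if R k \<omega> = r then real H else 0)" for \<omega>
  have \<delta>[measurable]: "\<delta> \<in> borel_measurable M" unfolding \<delta>_def using k by measurable
  have law: "distr (density M \<delta>) borel (X k) = \<mu> r"
    using stratum_law[OF k r] by (simp add: \<delta>_def)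
  have scaled: "(\<lambda>\<omega>. if R k \<omega> = r then g (X k \<omega>) else 0) = (\<lambda>\<omega>. \<delta> \<omega> * g (X k \<omega>) / real H)"
    using H_pos by (auto simp: \<delta>_def)
  have "integrable (density M \<delta>) (\<lambda>\<omega>. g (X k \<omega>))"
    using int k unfolding law[symmetric] by (subst (asm) integrable_distr_eq) auto
  then have "integrable M (\<lambda>\<omega>. \<delta> \<omega> * g (X k \<omega>))"
    using k by (subst (asm) integrable_density) (auto simp: \<delta>_def)
  then show "integrable M (\<lambda>\<omega>. if R k \<omega> = r then g (X k \<omega>) else 0)"
    unfolding scaled by simp
  have "integral\<^sup>L (\<mu> r) g = (\<integral>\<omega>. g (X k \<omega>) \<partial>density M \<delta>)"
    using k unfolding law[symmetric] by (subst integral_distr) auto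
  also have "\<dots> = (\<integral>\<omega>. \<delta> \<omega> * g (X k \<omega>) \<partial>M)"
    using k by (subst integral_density) (auto simp: \<delta>_def)
  finally show "(\<integral>\<omega>. (if R k \<omega> = r then g (X k \<omega>) else 0) \<partial>M) = integral\<^sup>L (\<mu> r) g / real H"
    unfolding scaled by simp
qed

lemma expectation_stratum_product:
  assumes \<rho>: "\<rho> \<in> rank_vectors H n"
    and g: "\<And>k. k < n \<Longrightarrow> g k \<in> borel_measurable borel"
      "\<And>k. k < n \<Longrightarrow> integrable (\<mu> (\<rho> k)) (g k)"
  shows "integrable M (\<lambda>\<omega>. \<Prod>k<n. if R k \<omega> = \<rho> k then g k (X k \<omega>) else 0)"
    and "(\<integral>\<omega>. (\<Prod>k<n. if R k \<omega> = \<rho> k then g k (X k \<omega>) else 0) \<partial>M)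
           = (\<Prod>k<n. integral\<^sup>L (\<mu> (\<rho> k)) (g k)) / real H ^ n"
proof -
  define f where "f k p = (if snd p = \<rho> k then g k (fst p) else 0)" for k and p :: "real \<times> nat"
  have "f k \<in> borel_measurable (borel \<Otimes>\<^sub>M count_space UNIV)" if "k \<in> {..<n}" for k
  proof -
    have [measurable]: "g k \<in> borel_measurable borel" using g(1) that by simp
    show ?thesis unfolding f_def by measurable
  qed
  then have indep_f: "indep_vars (\<lambda>_. borel) (\<lambda>k \<omega>. f k (X k \<omega>, R k \<omega>)) {..<n}"
    by (rule indep_vars_compose2[OF indep])
  have f_eq: "f k (X k \<omega>, R k \<omega>) = (if R k \<omega> = \<rho> k then g k (X k \<omega>) else 0)" for k \<omega>
    by (simp add: f_def)
  have int_f: "integrable M (\<lambda>\<omega>. f k (X k \<omega>, R k \<omega>))" if "k \<in> {..<n}" for k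
    using stratum_integral(1)[of k "\<rho> k" "g k"] that g rank_vectorsD[OF \<rho>] by (simp add: f_eq)
  show "integrable M (\<lambda>\<omega>. \<Prod>k<n. if R k \<omega> = \<rho> k then g k (X k \<omega>) else 0)"
    using indep_vars_integrable[OF _ indep_f int_f] by (simp add: f_eq)
  have "(\<integral>\<omega>. (\<Prod>k<n. if R k \<omega> = \<rho> k then g k (X k \<omega>) else 0) \<partial>M)
      = (\<Prod>k<n. \<integral>\<omega>. f k (X k \<omega>, R k \<omega>) \<partial>M)"
    using indep_vars_lebesgue_integral[OF _ indep_f int_f] by (simp add: f_eq)
  also have "\<dots> = (\<Prod>k<n. integral\<^sup>L (\<mu> (\<rho> k)) (g k) / real H)"
    using stratum_integral(2) g rank_vectorsD[OF \<rho>] by (intro prod.cong) (simp_all add: f_eq)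
  finally show "(\<integral>\<omega>. (\<Prod>k<n. if R k \<omega> = \<rho> k then g k (X k \<omega>) else 0) \<partial>M)
           = (\<Prod>k<n. integral\<^sup>L (\<mu> (\<rho> k)) (g k)) / real H ^ n"
    by (simp add: prod_dividef)
qed

definition rank_vector :: "'a \<Rightarrow> nat \<Rightarrow> nat" where
  "rank_vector \<omega> = restrict (\<lambda>i. R i \<omega>) {..<n}"

lemma rank_vector_in: "\<omega> \<in> space M \<Longrightarrow> rank_vector \<omega> \<in> rank_vectors H n"
  using R_range by (auto simp: rank_vectors_def rank_vector_def)

lemma prod_stratum_indicator:
  assumes "\<rho> \<in> rank_vectors H n"
  shows "(\<Prod>k<n. if R k \<omega> = \<rho> k then a k else 0)
       = (if rank_vector \<omega> = \<rho> then (\<Prod>k<n. a k) else (0 :: real))"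
proof (cases "rank_vector \<omega> = \<rho>")
  case True
  then have "R k \<omega> = \<rho> k" if "k < n" for k
    using that by (auto simp: rank_vector_def)
  then show ?thesis using True by (auto intro: prod.cong)
next
  case False
  then obtain i where i: "rank_vector \<omega> i \<noteq> \<rho> i" by auto
  have "i < n"
  proof (rule ccontr)
    assume "\<not> i < n"
    then show False
      using i PiE_arb[of \<rho> "{..<n}" "\<lambda>_. {1..H}" i] assms
      by (simp add: rank_vector_def rank_vectors_def)
  qed
  with i have "R i \<omega> \<noteq> \<rho> i" by (simp add: rank_vector_def)
  with \<open>i < n\<close> False show ?thesis by (simp add: prod_zero_iff) blast
qed

lemma expectation_given_ranks:
  assumes g: "\<And>k. k < n \<Longrightarrow> g k \<in> borel_measurable borel"
      "\<And>k r. k < n \<Longrightarrow> r \<in> {1..H} \<Longrightarrow> integrable (\<mu> r) (g k)"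
  shows "integrable M (\<lambda>\<omega>. (\<Prod>k<n. g k (X k \<omega>)) * \<phi> (rank_vector \<omega>))"
    and "(\<integral>\<omega>. (\<Prod>k<n. g k (X k \<omega>)) * \<phi> (rank_vector \<omega>) \<partial>M)
           = (\<Sum>\<rho>\<in>rank_vectors H n. \<phi> \<rho> * (\<Prod>k<n. integral\<^sup>L (\<mu> (\<rho> k)) (g k))) / real H ^ n"
proof -
  let ?G = "\<lambda>\<rho> \<omega>. \<Prod>k<n. if R k \<omega> = \<rho> k then g k (X k \<omega>) else 0"
  have split: "(\<Prod>k<n. g k (X k \<omega>)) * \<phi> (rank_vector \<omega>) = (\<Sum>\<rho>\<in>rank_vectors H n. \<phi> \<rho> * ?G \<rho> \<omega>)"
    if "\<omega> \<in> space M" for \<omega>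
  proof -
    have "(\<Sum>\<rho>\<in>rank_vectors H n. \<phi> \<rho> * ?G \<rho> \<omega>)
        = (\<Sum>\<rho>\<in>rank_vectors H n. if rank_vector \<omega> = \<rho> then \<phi> \<rho> * (\<Prod>k<n. g k (X k \<omega>)) else 0)"
      by (intro sum.cong refl) (simp add: prod_stratum_indicator)
    also have "\<dots> = \<phi> (rank_vector \<omega>) * (\<Prod>k<n. g k (X k \<omega>))"
      using rank_vector_in[OF that] finite_rank_vectors by (simp add: sum.delta)
    finally show ?thesis by simp
  qed
  have int_G: "integrable M (?G \<rho>)" if "\<rho> \<in> rank_vectors H n" for \<rho>
    using expectation_stratum_product(1)[OF that] g rank_vectorsD[OF that] by blast
  have int_sum: "integrable M (\<lambda>\<omega>. \<Sum>\<rho>\<in>rank_vectors H n. \<phi> \<rho> * ?G \<rho> \<omega>)"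
    using int_G by auto
  then show "integrable M (\<lambda>\<omega>. (\<Prod>k<n. g k (X k \<omega>)) * \<phi> (rank_vector \<omega>))"
    by (simp add: Bochner_Integration.integrable_cong[OF refl split])
  have "(\<integral>\<omega>. (\<Prod>k<n. g k (X k \<omega>)) * \<phi> (rank_vector \<omega>) \<partial>M)
      = (\<Sum>\<rho>\<in>rank_vectors H n. \<phi> \<rho> * integral\<^sup>L M (?G \<rho>))"
    using int_G by (simp add: Bochner_Integration.integral_cong[OF refl split])
  also have "\<dots> = (\<Sum>\<rho>\<in>rank_vectors H n. \<phi> \<rho> * (\<Prod>k<n. integral\<^sup>L (\<mu> (\<rho> k)) (g k))) / real H ^ n"
    using expectation_stratum_product(2) g rank_vectorsD
    by (simp add: sum_divide_distrib cong: sum.cong)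
  finally show "(\<integral>\<omega>. (\<Prod>k<n. g k (X k \<omega>)) * \<phi> (rank_vector \<omega>) \<partial>M)
           = (\<Sum>\<rho>\<in>rank_vectors H n. \<phi> \<rho> * (\<Prod>k<n. integral\<^sup>L (\<mu> (\<rho> k)) (g k))) / real H ^ n" .
qed

lemma expectation_coordinate_given_ranks:
  assumes i: "i < n" and h: "h \<in> borel_measurable borel" "\<And>r. r \<in> {1..H} \<Longrightarrow> integrable (\<mu> r) h"
  shows "integrable M (\<lambda>\<omega>. h (X i \<omega>) * \<phi> (rank_vector \<omega>))"
    and "(\<integral>\<omega>. h (X i \<omega>) * \<phi> (rank_vector \<omega>) \<partial>M)
           = (\<Sum>\<rho>\<in>rank_vectors H n. \<phi> \<rho> * integral\<^sup>L (\<mu> (\<rho> i)) h) / real H ^ n"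
proof -
  define g where "g k = (if k = i then h else (\<lambda>_. 1))" for k :: nat
  have g_props: "\<And>k. k < n \<Longrightarrow> g k \<in> borel_measurable borel"
    "\<And>k r. k < n \<Longrightarrow> r \<in> {1..H} \<Longrightarrow> integrable (\<mu> r) (g k)"
    using h integrable_stratum_const by (auto simp: g_def)
  have "(\<Prod>k<n. g k (x k)) = (\<Prod>k<n. if k = i then h (x k) else 1)" for x
    by (intro prod.cong) (auto simp: g_def)
  then have "(\<Prod>k<n. g k (x k)) = h (x i)" for x
    using i by (simp add: prod.delta)
  moreover have "(\<Prod>k<n. integral\<^sup>L (\<mu> (\<rho> k)) (g k)) = integral\<^sup>L (\<mu> (\<rho> i)) h"
    if "\<rho> \<in> rank_vectors H n" for \<rho>
  proof -
    have "(\<Prod>k<n. integral\<^sup>L (\<mu> (\<rho> k)) (g k))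
        = (\<Prod>k<n. if k = i then integral\<^sup>L (\<mu> (\<rho> k)) h else 1)"
      using rank_vectorsD[OF that] prob_space_stratum
      by (intro prod.cong) (auto simp: g_def prob_space.prob_space)
    then show ?thesis using i by (simp add: prod.delta)
  qed
  ultimately show "integrable M (\<lambda>\<omega>. h (X i \<omega>) * \<phi> (rank_vector \<omega>))"
    and "(\<integral>\<omega>. h (X i \<omega>) * \<phi> (rank_vector \<omega>) \<partial>M)
           = (\<Sum>\<rho>\<in>rank_vectors H n. \<phi> \<rho> * integral\<^sup>L (\<mu> (\<rho> i)) h) / real H ^ n"
    using expectation_given_ranks[where g = g and \<phi> = \<phi>, OF g_props] by (simp_all cong: sum.cong)
qed

lemma expectation_two_coordinates_given_ranks:
  assumes ij: "i < n" "j < n" "i \<noteq> j"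
    and h: "h \<in> borel_measurable borel" "\<And>r. r \<in> {1..H} \<Longrightarrow> integrable (\<mu> r) h"
    and h': "h' \<in> borel_measurable borel" "\<And>r. r \<in> {1..H} \<Longrightarrow> integrable (\<mu> r) h'"
  shows "integrable M (\<lambda>\<omega>. h (X i \<omega>) * h' (X j \<omega>) * \<phi> (rank_vector \<omega>))"
    and "(\<integral>\<omega>. h (X i \<omega>) * h' (X j \<omega>) * \<phi> (rank_vector \<omega>) \<partial>M)
           = (\<Sum>\<rho>\<in>rank_vectors H n.
                \<phi> \<rho> * integral\<^sup>L (\<mu> (\<rho> i)) h * integral\<^sup>L (\<mu> (\<rho> j)) h') / real H ^ n"
proof -
  define g where "g k = (if k = i then h else if k = j then h' else (\<lambda>_. 1))" for k :: nat
  have g_props: "\<And>k. k < n \<Longrightarrow> g k \<in> borel_measurable borel"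
    "\<And>k r. k < n \<Longrightarrow> r \<in> {1..H} \<Longrightarrow> integrable (\<mu> r) (g k)"
    using h h' integrable_stratum_const by (auto simp: g_def)
  have "(\<Prod>k<n. g k (x k)) = (\<Prod>k<n. if k = i then h (x k) else if k = j then h' (x k) else 1)" for x
    by (intro prod.cong) (auto simp: g_def)
  then have "(\<Prod>k<n. g k (x k)) = h (x i) * h' (x j)" for x
    using ij by (simp add: prod_two_deltas)
  moreover have "(\<Prod>k<n. integral\<^sup>L (\<mu> (\<rho> k)) (g k))
      = integral\<^sup>L (\<mu> (\<rho> i)) h * integral\<^sup>L (\<mu> (\<rho> j)) h'"
    if "\<rho> \<in> rank_vectors H n" for \<rho>
  proof -
    have "(\<Prod>k<n. integral\<^sup>L (\<mu> (\<rho> k)) (g k))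
        = (\<Prod>k<n. if k = i then integral\<^sup>L (\<mu> (\<rho> k)) h
                   else if k = j then integral\<^sup>L (\<mu> (\<rho> k)) h' else 1)"
      using rank_vectorsD[OF that] prob_space_stratum
      by (intro prod.cong) (auto simp: g_def prob_space.prob_space)
    then show ?thesis using ij by (simp add: prod_two_deltas)
  qed
  ultimately show "integrable M (\<lambda>\<omega>. h (X i \<omega>) * h' (X j \<omega>) * \<phi> (rank_vector \<omega>))"
    and "(\<integral>\<omega>. h (X i \<omega>) * h' (X j \<omega>) * \<phi> (rank_vector \<omega>) \<partial>M)
           = (\<Sum>\<rho>\<in>rank_vectors H n.
                \<phi> \<rho> * integral\<^sup>L (\<mu> (\<rho> i)) h * integral\<^sup>L (\<mu> (\<rho> j)) h') / real H ^ n"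
    using expectation_given_ranks[where g = g and \<phi> = \<phi>, OF g_props]
    by (simp_all add: mult.assoc cong: sum.cong)
qed

section \<open>Moments of the estimator\<close>

definition stratum_mean :: "nat \<Rightarrow> real" where
  "stratum_mean r = (\<integral>x. K (t - x) \<partial>\<mu> r)"

definition stratum_msq :: "nat \<Rightarrow> real" where
  "stratum_msq r = (\<integral>x. K (t - x) ^ 2 \<partial>\<mu> r)"

lemma integrable_stratum_kernel:
  assumes "r \<in> {1..H}"
  shows "integrable (\<mu> r) (\<lambda>x. K (t - x) ^ e)"
  using integrable_power_is_cdf[OF prob_space.finite_measure[OF prob_space_stratum[OF assms]] K]
    borel_measurable_real_distribution[OF dist_r[OF assms], of "\<lambda>x. t - x"]
  by simp

lemma integrable_stratum_kernel_1: "r \<in> {1..H} \<Longrightarrow> integrable (\<mu> r) (\<lambda>x. K (t - x))"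
  using integrable_stratum_kernel[of r 1] by simp

lemma variance_stratum_kernel:
  assumes "r \<in> {1..H}"
  shows "prob_space.variance (\<mu> r) (\<lambda>x. K (t - x)) = stratum_msq r - (stratum_mean r)\<^sup>2"
proof -
  have "(\<lambda>x. t - x) \<in> borel_measurable (\<mu> r)"
    by (rule borel_measurable_real_distribution[OF dist_r[OF assms]]) measurable
  from variance_is_cdf[OF prob_space_stratum[OF assms] K this] show ?thesis
    by (simp add: stratum_msq_def stratum_mean_def)
qed

lemma mixture_law: "\<mu>X = distr M borel (X 0)"
proof -
  have n0: "0 < n" using n by simp
  have "cdf (distr M borel (X 0)) s = cdf \<mu>X s" for s
  proof -
    have "cdf (distr M borel (X 0)) s = prob {\<omega> \<in> space M. X 0 \<omega> \<le> s}"
      unfolding cdf_def using n0 by (subst measure_distr) (auto intro!: arg_cong[where f=prob])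
    also have "{\<omega> \<in> space M. X 0 \<omega> \<le> s} = (\<Union>r\<in>{1..H}. {\<omega> \<in> space M. X 0 \<omega> \<le> s \<and> R 0 \<omega> = r})"
      using R_range[OF n0] by auto
    also have "prob \<dots> = (\<Sum>r=1..H. prob {\<omega> \<in> space M. X 0 \<omega> \<le> s \<and> R 0 \<omega> = r})"
      using n0 by (intro finite_measure_finite_Union) (auto simp: disjoint_family_on_def)
    also have "\<dots> = cdf \<mu>X s"
      using X_cond[OF n0] consistent[of s] by (simp add: sum_divide_distrib)
    finally show ?thesis .
  qed
  moreover have "real_distribution (distr M borel (X 0))"
    using prob_space_distr[OF X_measurable[OF n0]]
    by (simp add: real_distribution_def real_distribution_axioms_def)
  ultimately show ?thesis using distX by (intro cdf_unique) auto
qed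

lemma integral_mixture:
  assumes h: "h \<in> borel_measurable borel" "\<And>r. r \<in> {1..H} \<Longrightarrow> integrable (\<mu> r) h"
  shows "integral\<^sup>L \<mu>X h = (\<Sum>r=1..H. integral\<^sup>L (\<mu> r) h) / real H"
proof -
  have n0: "0 < n" using n by simp
  have "integral\<^sup>L \<mu>X h = (\<integral>\<omega>. h (X 0 \<omega>) \<partial>M)"
    unfolding mixture_law using n0 h(1) by (subst integral_distr) auto
  also have "\<dots> = (\<integral>\<omega>. (\<Sum>r=1..H. if R 0 \<omega> = r then h (X 0 \<omega>) else 0) \<partial>M)"
    using R_range[OF n0] by (intro Bochner_Integration.integral_cong refl) (simp add: sum.delta')
  also have "\<dots> = (\<Sum>r=1..H. \<integral>\<omega>. (if R 0 \<omega> = r then h (X 0 \<omega>) else 0) \<partial>M)"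
    using stratum_integral(1)[OF n0 _ h(1) h(2)] by (intro Bochner_Integration.integral_sum) auto
  also have "\<dots> = (\<Sum>r=1..H. integral\<^sup>L (\<mu> r) h / real H)"
    using stratum_integral(2)[OF n0 _ h(1) h(2)] by (intro sum.cong) auto
  finally show ?thesis by (simp add: sum_divide_distrib)
qed

lemma mean_mixture_kernel: "(\<integral>x. K (t - x) \<partial>\<mu>X) = (\<Sum>r=1..H. stratum_mean r) / real H"
  unfolding stratum_mean_def by (rule integral_mixture[OF _ integrable_stratum_kernel_1]) measurable

lemma variance_mixture:
  "real H * prob_space.variance \<mu>X (\<lambda>x. K (t - x))
     = (\<Sum>r=1..H. stratum_msq r - (stratum_mean r)\<^sup>2)
     + (\<Sum>r=1..H. (stratum_mean r - (\<Sum>s=1..H. stratum_mean s) / real H)\<^sup>2)"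
proof -
  have "prob_space.variance \<mu>X (\<lambda>x. K (t - x))
      = (\<integral>x. K (t - x) ^ 2 \<partial>\<mu>X) - (\<integral>x. K (t - x) \<partial>\<mu>X)\<^sup>2"
    using distX borel_measurable_real_distribution[OF distX, of "\<lambda>x. t - x"]
    by (intro variance_is_cdf[OF _ K]) (auto simp: real_distribution_def)
  also have "\<dots> = (\<Sum>r=1..H. stratum_msq r) / real H - ((\<Sum>r=1..H. stratum_mean r) / real H)\<^sup>2"
  proof -
    have "(\<integral>x. K (t - x) ^ 2 \<partial>\<mu>X) = (\<Sum>r=1..H. stratum_msq r) / real H"
      unfolding stratum_msq_def
      by (rule integral_mixture[OF _ integrable_stratum_kernel[where e = 2]]) measurable
    then show ?thesis by (simp add: mean_mixture_kernel)
  qed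
  finally have variance: "prob_space.variance \<mu>X (\<lambda>x. K (t - x))
      = (\<Sum>r=1..H. stratum_msq r) / real H - ((\<Sum>r=1..H. stratum_mean r) / real H)\<^sup>2" .
  have "real H * (A / real H - (B / real H)\<^sup>2) = (A - C) + (C - B\<^sup>2 / real H)" for A B C :: real
    using H by (simp add: field_simps power2_eq_square)
  then show ?thesis
    using sum_sq_deviation[of "{1..H}" stratum_mean] H
    unfolding variance sum_subtractf by simp
qed

lemma jps_N_eq: "jps_N n R r \<omega> = rv_N n (rank_vector \<omega>) r"
proof -
  have "{i. i < n \<and> R i \<omega> = r} = {i. i < n \<and> rank_vector \<omega> i = r}"
    by (auto simp: rank_vector_def)
  then show ?thesis by (simp add: jps_N_def rv_N_def)
qed

lemma jps_W_eq: "jps_W H n R r \<omega> = rv_W H n (rank_vector \<omega>) r"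
  by (simp add: jps_W_def rv_W_def jps_d_def rv_d_def jps_N_eq)

lemma jps_J_eq: "jps_J n R r \<omega> = rv_J n (rank_vector \<omega>) r"
  by (simp add: jps_J_def rv_J_def jps_N_eq)

lemma jps_F_eq:
  assumes "\<omega> \<in> space M"
  shows "jps_F H n K X R t \<omega> = (\<Sum>i<n. K (t - X i \<omega>) * obs_weight H n (rank_vector \<omega>) i)"
  using jps_F_eq_sum_obs[of n R \<omega> H K X t] R_range[OF _ assms]
  by (simp add: jps_W_eq jps_J_eq obs_weight_def rank_vector_def)

lemma expectation_rank_function:
  shows "integrable M (\<lambda>\<omega>. \<phi> (rank_vector \<omega>))"
    and "(\<integral>\<omega>. \<phi> (rank_vector \<omega>) \<partial>M) = rv_avg H n \<phi>"
proof -
  have "(\<Prod>k<n. measure (\<mu> (\<rho> k)) (space (\<mu> (\<rho> k)))) = 1" if "\<rho> \<in> rank_vectors H n" for \<rho>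
    using rank_vectorsD[OF that] prob_space_stratum
    by (auto intro!: prod.neutral simp: prob_space.prob_space)
  then show "integrable M (\<lambda>\<omega>. \<phi> (rank_vector \<omega>))"
    and "(\<integral>\<omega>. \<phi> (rank_vector \<omega>) \<partial>M) = rv_avg H n \<phi>"
    using expectation_given_ranks[of "\<lambda>_ _. 1" \<phi>] integrable_stratum_const
    by (simp_all add: rv_avg_def cong: sum.cong)
qed

lemma expectation_kernel_given_ranks:
  assumes "i < n"
  shows "integrable M (\<lambda>\<omega>. K (t - X i \<omega>) * \<phi> (rank_vector \<omega>))"
    and "(\<integral>\<omega>. K (t - X i \<omega>) * \<phi> (rank_vector \<omega>) \<partial>M)
           = rv_avg H n (\<lambda>\<rho>. \<phi> \<rho> * stratum_mean (\<rho> i))"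
  using expectation_coordinate_given_ranks[OF assms _ integrable_stratum_kernel_1, of \<phi>]
  by (simp_all add: rv_avg_def stratum_mean_def)

lemma expectation_kernel_pair_given_ranks:
  assumes ij: "i < n" "j < n"
  shows "integrable M (\<lambda>\<omega>. K (t - X i \<omega>) * K (t - X j \<omega>) * \<phi> (rank_vector \<omega>))"
    and "(\<integral>\<omega>. K (t - X i \<omega>) * K (t - X j \<omega>) * \<phi> (rank_vector \<omega>) \<partial>M)
           = rv_avg H n (\<lambda>\<rho>. \<phi> \<rho> * (if i = j then stratum_msq (\<rho> i)
                                        else stratum_mean (\<rho> i) * stratum_mean (\<rho> j)))"
proof -
  have "integrable M (\<lambda>\<omega>. K (t - X i \<omega>) * K (t - X j \<omega>) * \<phi> (rank_vector \<omega>)) \<and>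
      (\<integral>\<omega>. K (t - X i \<omega>) * K (t - X j \<omega>) * \<phi> (rank_vector \<omega>) \<partial>M)
           = rv_avg H n (\<lambda>\<rho>. \<phi> \<rho> * (if i = j then stratum_msq (\<rho> i)
                                        else stratum_mean (\<rho> i) * stratum_mean (\<rho> j)))"
  proof (cases "i = j")
    case True
    then show ?thesis
      using expectation_coordinate_given_ranks[OF ij(1) _ integrable_stratum_kernel, of 2 \<phi>]
      by (simp add: rv_avg_def stratum_msq_def power2_eq_square mult.assoc)
  next
    case False
    then show ?thesis
      using expectation_two_coordinates_given_ranks[OF ij False _ integrable_stratum_kernel_1
          _ integrable_stratum_kernel_1, of \<phi>]
      by (simp add: rv_avg_def stratum_mean_def mult_ac)
  qed
  then show "integrable M (\<lambda>\<omega>. K (t - X i \<omega>) * K (t - X j \<omega>) * \<phi> (rank_vector \<omega>))"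
    and "(\<integral>\<omega>. K (t - X i \<omega>) * K (t - X j \<omega>) * \<phi> (rank_vector \<omega>) \<partial>M)
           = rv_avg H n (\<lambda>\<rho>. \<phi> \<rho> * (if i = j then stratum_msq (\<rho> i)
                                        else stratum_mean (\<rho> i) * stratum_mean (\<rho> j)))"
    by auto
qed

lemma integrable_jps_F: "integrable M (jps_F H n K X R t)"
proof -
  have "integrable M (\<lambda>\<omega>. \<Sum>i<n. K (t - X i \<omega>) * obs_weight H n (rank_vector \<omega>) i)"
    by (intro Bochner_Integration.integrable_sum
        expectation_kernel_given_ranks(1)[where \<phi> = "\<lambda>\<rho>. obs_weight H n \<rho> _"]) simp
  then show ?thesis
    by (simp add: Bochner_Integration.integrable_cong[OF refl jps_F_eq])
qed

lemma expectation_jps_F: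
  "(\<integral>\<omega>. jps_F H n K X R t \<omega> \<partial>M) = rv_avg H n (\<lambda>\<rho>. \<Sum>r=1..H. rv_W H n \<rho> r * stratum_mean r)"
proof -
  have "(\<integral>\<omega>. jps_F H n K X R t \<omega> \<partial>M)
      = (\<integral>\<omega>. (\<Sum>i<n. K (t - X i \<omega>) * obs_weight H n (rank_vector \<omega>) i) \<partial>M)"
    by (simp add: Bochner_Integration.integral_cong[OF refl jps_F_eq])
  also have "\<dots> = (\<Sum>i<n. \<integral>\<omega>. K (t - X i \<omega>) * obs_weight H n (rank_vector \<omega>) i \<partial>M)"
    by (intro Bochner_Integration.integral_sum
        expectation_kernel_given_ranks(1)[where \<phi> = "\<lambda>\<rho>. obs_weight H n \<rho> _"]) simp
  also have "\<dots> = (\<Sum>i<n. rv_avg H n (\<lambda>\<rho>. obs_weight H n \<rho> i * stratum_mean (\<rho> i)))"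
    by (intro sum.cong refl expectation_kernel_given_ranks(2)) simp
  also have "\<dots> = rv_avg H n (\<lambda>\<rho>. \<Sum>i<n. obs_weight H n \<rho> i * stratum_mean (\<rho> i))"
    by (simp add: rv_avg_sum)
  also have "\<dots> = rv_avg H n (\<lambda>\<rho>. \<Sum>r=1..H. rv_W H n \<rho> r * stratum_mean r)"
    by (intro rv_avg_cong sum_obs_weight)
  finally show ?thesis .
qed

lemma expectation_jps_F_sq:
  "integrable M (\<lambda>\<omega>. (jps_F H n K X R t \<omega>)\<^sup>2)"
  "(\<integral>\<omega>. (jps_F H n K X R t \<omega>)\<^sup>2 \<partial>M)
     = rv_avg H n (\<lambda>\<rho>. (\<Sum>r=1..H. (rv_W H n \<rho> r)\<^sup>2 * rv_J n \<rho> r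
                              * (stratum_msq r - (stratum_mean r)\<^sup>2))
                      + (\<Sum>r=1..H. rv_W H n \<rho> r * stratum_mean r)\<^sup>2)"
proof -
  let ?a = "obs_weight H n"
  have sq: "(jps_F H n K X R t \<omega>)\<^sup>2 = (\<Sum>i<n. \<Sum>j<n. K (t - X i \<omega>) * K (t - X j \<omega>)
              * (?a (rank_vector \<omega>) i * ?a (rank_vector \<omega>) j))" if "\<omega> \<in> space M" for \<omega>
    by (simp add: jps_F_eq[OF that] power2_eq_square sum_product mult_ac)
  have int: "integrable M (\<lambda>\<omega>. K (t - X i \<omega>) * K (t - X j \<omega>)
              * (?a (rank_vector \<omega>) i * ?a (rank_vector \<omega>) j))" if "i < n" "j < n" for i j
    using expectation_kernel_pair_given_ranks(1)[OF that] .
  have "integrable M (\<lambda>\<omega>. \<Sum>i<n. \<Sum>j<n. K (t - X i \<omega>) * K (t - X j \<omega>)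
              * (?a (rank_vector \<omega>) i * ?a (rank_vector \<omega>) j))"
    using int by (intro Bochner_Integration.integrable_sum) auto
  then show "integrable M (\<lambda>\<omega>. (jps_F H n K X R t \<omega>)\<^sup>2)"
    by (simp add: Bochner_Integration.integrable_cong[OF refl sq])
  have "(\<integral>\<omega>. (jps_F H n K X R t \<omega>)\<^sup>2 \<partial>M)
      = rv_avg H n (\<lambda>\<rho>. \<Sum>i<n. \<Sum>j<n. ?a \<rho> i * ?a \<rho> j * (if i = j then stratum_msq (\<rho> i)
                                        else stratum_mean (\<rho> i) * stratum_mean (\<rho> j)))"
  proof -
    have "(\<integral>\<omega>. (jps_F H n K X R t \<omega>)\<^sup>2 \<partial>M)
        = (\<integral>\<omega>. (\<Sum>i<n. \<Sum>j<n. K (t - X i \<omega>) * K (t - X j \<omega>)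
              * (?a (rank_vector \<omega>) i * ?a (rank_vector \<omega>) j)) \<partial>M)"
      by (simp add: Bochner_Integration.integral_cong[OF refl sq])
    also have "\<dots> = (\<Sum>i<n. \<Sum>j<n. \<integral>\<omega>. K (t - X i \<omega>) * K (t - X j \<omega>)
              * (?a (rank_vector \<omega>) i * ?a (rank_vector \<omega>) j) \<partial>M)"
      by (subst Bochner_Integration.integral_sum, (intro Bochner_Integration.integrable_sum int; simp))
        (intro sum.cong refl Bochner_Integration.integral_sum int, auto)
    also have "\<dots> = (\<Sum>i<n. \<Sum>j<n. rv_avg H n (\<lambda>\<rho>. ?a \<rho> i * ?a \<rho> j *
        (if i = j then stratum_msq (\<rho> i) else stratum_mean (\<rho> i) * stratum_mean (\<rho> j))))"
      by (intro sum.cong refl expectation_kernel_pair_given_ranks(2)) auto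
    finally show ?thesis by (simp add: rv_avg_sum)
  qed
  also have "\<dots> = rv_avg H n (\<lambda>\<rho>. (\<Sum>r=1..H. (rv_W H n \<rho> r)\<^sup>2 * rv_J n \<rho> r
                              * (stratum_msq r - (stratum_mean r)\<^sup>2))
                      + (\<Sum>r=1..H. rv_W H n \<rho> r * stratum_mean r)\<^sup>2)"
    by (intro rv_avg_cong)
      (simp add: double_sum_diag_split sum_obs_weight
        sum_sq_obs_weight[where v = "\<lambda>r. stratum_msq r - (stratum_mean r)\<^sup>2"])
  finally show "(\<integral>\<omega>. (jps_F H n K X R t \<omega>)\<^sup>2 \<partial>M) = \<dots>" .
qed

lemma variance_jps_F:
  "prob_space.variance M (jps_F H n K X R t)
     = rv_avg H n (\<lambda>\<rho>. (rv_W H n \<rho> 1)\<^sup>2 * rv_J n \<rho> 1)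
         * (\<Sum>r=1..H. stratum_msq r - (stratum_mean r)\<^sup>2)
     + real H / (real H - 1) * (rv_avg H n (\<lambda>\<rho>. (rv_W H n \<rho> 1)\<^sup>2) - (1 / real H)\<^sup>2)
         * (\<Sum>r=1..H. (stratum_mean r - (\<Sum>s=1..H. stratum_mean s) / real H)\<^sup>2)"
  using variance_eq[OF integrable_jps_F expectation_jps_F_sq(1)]
    expectation_jps_F_sq(2) expectation_jps_F rv_avg_W_sq_J_weighted[of H n] H
    rv_avg_weighted_means_sq[OF H n, of stratum_mean]
  by (simp add: rv_avg_add)

lemma expectation_jps_W_sq_J:
  "(\<integral>\<omega>. (jps_W H n R 1 \<omega>)\<^sup>2 * jps_J n R 1 \<omega> \<partial>M) = rv_avg H n (\<lambda>\<rho>. (rv_W H n \<rho> 1)\<^sup>2 * rv_J n \<rho> 1)"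
  by (simp only: jps_W_eq jps_J_eq
      expectation_rank_function(2)[where \<phi> = "\<lambda>\<rho>. (rv_W H n \<rho> 1)\<^sup>2 * rv_J n \<rho> 1"])

lemma variance_jps_W:
  "prob_space.variance M (jps_W H n R 1) = rv_avg H n (\<lambda>\<rho>. (rv_W H n \<rho> 1)\<^sup>2) - (1 / real H)\<^sup>2"
proof -
  have W: "jps_W H n R 1 = (\<lambda>\<omega>. rv_W H n (rank_vector \<omega>) 1)"
    by (simp add: jps_W_eq fun_eq_iff)
  have "prob_space.variance M (\<lambda>\<omega>. rv_W H n (rank_vector \<omega>) 1)
      = (\<integral>\<omega>. (rv_W H n (rank_vector \<omega>) 1)\<^sup>2 \<partial>M) - (\<integral>\<omega>. rv_W H n (rank_vector \<omega>) 1 \<partial>M)\<^sup>2"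
    by (intro variance_eq expectation_rank_function(1))
  then show ?thesis
    unfolding W using rv_avg_W[of H n 1] H n
      expectation_rank_function(2)[where \<phi> = "\<lambda>\<rho>. (rv_W H n \<rho> 1)\<^sup>2"]
      expectation_rank_function(2)[where \<phi> = "\<lambda>\<rho>. rv_W H n \<rho> 1"]
    by simp
qed

end

theorem mainTheorem2:
  fixes M :: "'a measure" and H n :: nat
    and X :: "nat \<Rightarrow> 'a \<Rightarrow> real" and R :: "nat \<Rightarrow> 'a \<Rightarrow> nat"
    and \<mu> :: "nat \<Rightarrow> real measure" and \<mu>X :: "real measure"
    and K :: "real \<Rightarrow> real" and t :: real
  assumes "prob_space M"
    and H: "H \<ge> 2" and n: "n \<ge> 1"
    and dist_r: "\<And>r. r \<in> {1..H} \<Longrightarrow> real_distribution (\<mu> r)"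
    and distX: "real_distribution \<mu>X"
    and consistent: "\<And>s. cdf \<mu>X s = (1 / real H) * (\<Sum>r=1..H. cdf (\<mu> r) s)"
    and indep: "prob_space.indep_vars M (\<lambda>i. borel \<Otimes>\<^sub>M count_space UNIV)
                   (\<lambda>i \<omega>. (X i \<omega>, R i \<omega>)) {..<n}"
    and R_range: "\<And>i \<omega>. i < n \<Longrightarrow> \<omega> \<in> space M \<Longrightarrow> R i \<omega> \<in> {1..H}"
    and R_unif: "\<And>i r. i < n \<Longrightarrow> r \<in> {1..H} \<Longrightarrow>
                   measure M {\<omega> \<in> space M. R i \<omega> = r} = 1 / real H"
    and X_cond: "\<And>i r s. i < n \<Longrightarrow> r \<in> {1..H} \<Longrightarrow>
                   measure M {\<omega> \<in> space M. X i \<omega> \<le> s \<and> R i \<omega> = r}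
                   = cdf (\<mu> r) s * (1 / real H)"
    and K: "is_cdf K"
  shows
    "prob_space.variance M (jps_F H n K X R t) =
       prob_space.expectation M (\<lambda>\<omega>. (jps_W H n R 1 \<omega>)\<^sup>2 * jps_J n R 1 \<omega>)
         * (\<Sum>r=1..H. prob_space.variance (\<mu> r) (\<lambda>x. K (t - x)))
     + real H / (real H - 1) * prob_space.variance M (jps_W H n R 1)
         * (\<Sum>r=1..H. (prob_space.expectation (\<mu> r) (\<lambda>x. K (t - x))
                        - prob_space.expectation \<mu>X (\<lambda>x. K (t - x)))\<^sup>2)
   \<and> prob_space.variance M (jps_F H n K X R t) =
       real H * prob_space.expectation M (\<lambda>\<omega>. (jps_W H n R 1 \<omega>)\<^sup>2 * jps_J n R 1 \<omega>)
         * prob_space.variance \<mu>X (\<lambda>x. K (t - x))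
     - (prob_space.expectation M (\<lambda>\<omega>. (jps_W H n R 1 \<omega>)\<^sup>2 * jps_J n R 1 \<omega>)
         - real H / (real H - 1) * prob_space.variance M (jps_W H n R 1))
       * (\<Sum>r=1..H. (prob_space.expectation (\<mu> r) (\<lambda>x. K (t - x))
                        - prob_space.expectation \<mu>X (\<lambda>x. K (t - x)))\<^sup>2)"
proof -
  interpret jps_sample M H n X R \<mu> \<mu>X K t
    by (intro jps_sample.intro jps_sample_axioms.intro) (fact assms)+
  define A where "A = expectation (\<lambda>\<omega>. (jps_W H n R 1 \<omega>)\<^sup>2 * jps_J n R 1 \<omega>)"
  define c where "c = real H / (real H - 1) * prob_space.variance M (jps_W H n R 1)"
  define D where "D = (\<Sum>r=1..H. (prob_space.expectation (\<mu> r) (\<lambda>x. K (t - x))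
                        - prob_space.expectation \<mu>X (\<lambda>x. K (t - x)))\<^sup>2)"
  have variances: "(\<Sum>r=1..H. prob_space.variance (\<mu> r) (\<lambda>x. K (t - x)))
      = (\<Sum>r=1..H. stratum_msq r - (stratum_mean r)\<^sup>2)"
    by (intro sum.cong refl variance_stratum_kernel)
  have deviations: "D = (\<Sum>r=1..H. (stratum_mean r - (\<Sum>s=1..H. stratum_mean s) / real H)\<^sup>2)"
    by (simp add: D_def mean_mixture_kernel stratum_mean_def)
  have first: "prob_space.variance M (jps_F H n K X R t)
      = A * (\<Sum>r=1..H. prob_space.variance (\<mu> r) (\<lambda>x. K (t - x))) + c * D"
    unfolding variances deviations A_def c_def expectation_jps_W_sq_J variance_jps_W
    by (rule variance_jps_F)
  moreover have "real H * A * prob_space.variance \<mu>X (\<lambda>x. K (t - x))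
      = A * (\<Sum>r=1..H. prob_space.variance (\<mu> r) (\<lambda>x. K (t - x))) + A * D"
    unfolding variances deviations mult.commute[of "real H" A] mult.assoc variance_mixture
    by (simp add: distrib_left)
  moreover have "x = a * s + c * d \<Longrightarrow> h * a * v = a * s + a * d \<Longrightarrow> x = h * a * v - (a - c) * d"
    for x a s c d h v :: real
    by (simp add: algebra_simps)
  ultimately show ?thesis
    unfolding A_def[symmetric] c_def[symmetric] D_def[symmetric] by blast
qed

end
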